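(* Let $F$ be a compact metric space, $Y$ a normed space, and $S\colon F\to Y$ a continuous mapping. Then for every $n\in\mathbb{N}$, \[ \delta_n(S)\le 2\, e_n^{\mathrm{cont\text{-}non}}(S). \]
   Context: $e_n^{\mathrm{cont\text{-}non}}(S):=\inf\{\sup_{f\in F}\|S(f)-\Phi(N(f))\|_Y : N\colon F\to\mathbb{R}^n\text{ continuous},\ \Phi\colon\mathbb{R}^n\to Y\text{ arbitrary}\}$. The manifold widths are $\delta_n(S):=\inf\{\sup_{f\in F}\|S(f)-\Phi(N(f))\|_Y : N\colon F\to\mathbb{R}^n \text{ continuous},\ \Phi\colon\mathbb{R}^n\to Y\text{ continuous}\}$. *)

theory Defs
  imports "HOL-Analysis.Analysis"
begin

text \<open>R^n is modelled as the subspace of nat \<Rightarrow> real (product topology) of vectors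
  supported in {0..<n}; on this subspace the product topology is the Euclidean one.\<close>

definition Rn :: "nat \<Rightarrow> (nat \<Rightarrow> real) set" where
  "Rn n = {x. \<forall>i\<ge>n. x i = 0}"

text \<open>Worst-case error of the algorithm Phi o N; values in ennreal (Sup of empty set is 0,
  unbounded errors give infinity).\<close>
definition wc_err :: "'a set \<Rightarrow> ('a \<Rightarrow> 'b::real_normed_vector) \<Rightarrow> ('a \<Rightarrow> nat \<Rightarrow> real)
    \<Rightarrow> ((nat \<Rightarrow> real) \<Rightarrow> 'b) \<Rightarrow> ennreal" where
  "wc_err F S N Phi = (SUP f\<in>F. ennreal (norm (S f - Phi (N f))))"

definition e_cont_non :: "nat \<Rightarrow> 'a::topological_space set \<Rightarrow> ('a \<Rightarrow> 'b::real_normed_vector) \<Rightarrow> ennreal" where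
  "e_cont_non n F S = (INF (N, Phi) \<in> {(N, Phi). continuous_on F N \<and> N ` F \<subseteq> Rn n}.
      wc_err F S N Phi)"

definition manifold_width :: "nat \<Rightarrow> 'a::topological_space set \<Rightarrow> ('a \<Rightarrow> 'b::real_normed_vector) \<Rightarrow> ennreal" where
  "manifold_width n F S = (INF (N, Phi) \<in> {(N, Phi). continuous_on F N \<and> N ` F \<subseteq> Rn n
      \<and> continuous_on (Rn n) Phi}. wc_err F S N Phi)"

end

theory Submission
  imports Defs
begin

text \<open>Let \<open>N\<close> be continuous information and \<open>\<Phi>\<close> an arbitrary reconstruction with worst-case
  error \<open>\<epsilon>\<close>. By the triangle inequality, two inputs with the same information have images at
  distance at most \<open>2\<epsilon>\<close>; by compactness of \<open>F\<close> this persists, up to any \<open>\<eta> > 0\<close>, for inputs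
  whose information is \<open>\<delta>\<close>-close. Choosing representatives of a finite \<open>\<delta>/2\<close>-net of the compact
  set \<open>N(F)\<close> and gluing their images with a continuous partition of unity yields a continuous
  reconstruction with error at most \<open>2\<epsilon> + \<eta>\<close>.\<close>

lemma uniform_fibre_modulus:
  fixes F :: "'a::t2_space set" and S :: "'a \<Rightarrow> 'b::metric_space"
    and N :: "'a \<Rightarrow> 'c::metric_space"
  assumes F: "compact F" and S: "continuous_on F S" and N: "continuous_on F N"
    and fibre: "\<And>f g. f \<in> F \<Longrightarrow> g \<in> F \<Longrightarrow> N f = N g \<Longrightarrow> dist (S f) (S g) \<le> c"
    and "\<eta> > 0"
  obtains \<delta> where "\<delta> > 0"
    and "\<And>f g. f \<in> F \<Longrightarrow> g \<in> F \<Longrightarrow> dist (N f) (N g) < \<delta> \<Longrightarrow> dist (S f) (S g) \<le> c + \<eta>"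
proof -
  define C where "C = (F \<times> F) \<inter> (\<lambda>p. dist (S (fst p)) (S (snd p))) -` {c + \<eta>..}"
  have FF: "compact (F \<times> F)"
    using F by (simp add: compact_Times)
  have "continuous_on (F \<times> F) (\<lambda>p. dist (S (fst p)) (S (snd p)))"
    by (intro continuous_intros continuous_on_compose2[OF S]) auto
  then have "closed C"
    unfolding C_def by (rule continuous_closed_preimage) (auto simp: compact_imp_closed FF)
  then have C: "compact C"
    using compact_Int_closed[OF FF \<open>closed C\<close>] by (simp add: C_def Int_left_absorb)
  show ?thesis
  proof (cases "C = {}")
    case True
    show ?thesis
      by (rule that[of 1]) (use True in \<open>auto simp: C_def\<close>)
  next
    case False
    have "continuous_on C (\<lambda>p. dist (N (fst p)) (N (snd p)))"
      by (intro continuous_intros continuous_on_compose2[OF N]) (auto simp: C_def)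
    then obtain p where p: "p \<in> C"
      and p_min: "\<And>q. q \<in> C \<Longrightarrow> dist (N (fst p)) (N (snd p)) \<le> dist (N (fst q)) (N (snd q))"
      using continuous_attains_inf[OF C False] by blast
    show ?thesis
    proof (rule that)
      show "0 < dist (N (fst p)) (N (snd p))"
        using p fibre[of "fst p" "snd p"] \<open>\<eta> > 0\<close> by (force simp: C_def)
    next
      fix f g assume "f \<in> F" "g \<in> F" "dist (N f) (N g) < dist (N (fst p)) (N (snd p))"
      then show "dist (S f) (S g) \<le> c + \<eta>"
        using p_min[of "(f, g)"] by (force simp: C_def)
    qed
  qed
qed

lemma norm_diff_weighted_average_le:
  fixes v :: "'i \<Rightarrow> 'b::real_normed_vector"
  assumes K: "finite K" and w_nonneg: "\<And>y. y \<in> K \<Longrightarrow> 0 \<le> w y" and "0 < sum w K"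
    and close: "\<And>y. y \<in> K \<Longrightarrow> w y \<noteq> 0 \<Longrightarrow> norm (a - v y) \<le> c"
  shows "norm (a - inverse (sum w K) *\<^sub>R (\<Sum>y\<in>K. w y *\<^sub>R v y)) \<le> c"
proof -
  let ?s = "sum w K"
  have "a - inverse ?s *\<^sub>R (\<Sum>y\<in>K. w y *\<^sub>R v y) = inverse ?s *\<^sub>R (\<Sum>y\<in>K. w y *\<^sub>R (a - v y))"
    using \<open>0 < ?s\<close>
    by (simp add: scaleR_diff_right sum_subtractf scaleR_sum_left[symmetric] scaleR_diff_left)
  also have "norm \<dots> \<le> inverse ?s * (\<Sum>y\<in>K. norm (w y *\<^sub>R (a - v y)))"
    using \<open>0 < ?s\<close> norm_sum[of "\<lambda>y. w y *\<^sub>R (a - v y)" K] by (simp add: mult_left_mono)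
  also have "\<dots> \<le> inverse ?s * (\<Sum>y\<in>K. w y * c)"
  proof (intro mult_left_mono sum_mono)
    fix y assume "y \<in> K"
    then show "norm (w y *\<^sub>R (a - v y)) \<le> w y * c"
      using w_nonneg close by (cases "w y = 0") (auto intro: mult_left_mono)
  qed (use \<open>0 < ?s\<close> in simp)
  also have "\<dots> = c"
    using \<open>0 < ?s\<close> by (simp flip: sum_distrib_right)
  finally show ?thesis .
qed

lemma continuous_approximate_factorization:
  fixes N :: "'a \<Rightarrow> 'c::metric_space" and S :: "'a \<Rightarrow> 'b::real_normed_vector"
  assumes "compact (N ` F)" and "\<delta> > 0"
    and modulus: "\<And>f g. f \<in> F \<Longrightarrow> g \<in> F \<Longrightarrow> dist (N f) (N g) < \<delta> \<Longrightarrow> dist (S f) (S g) \<le> c"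
  obtains P where "continuous_on UNIV P" and "\<And>f. f \<in> F \<Longrightarrow> norm (S f - P (N f)) \<le> c"
proof -
  obtain K where K: "finite K" "K \<subseteq> N ` F" and net: "N ` F \<subseteq> (\<Union>y\<in>K. ball y (\<delta>/2))"
    using seq_compact_imp_totally_bounded[OF compact_imp_seq_compact[OF \<open>compact (N ` F)\<close>]] \<open>\<delta> > 0\<close> half_gt_zero by metis
  have "\<forall>y\<in>K. \<exists>f. f \<in> F \<and> N f = y"
    using K(2) by blast
  then obtain r where r: "\<And>y. y \<in> K \<Longrightarrow> r y \<in> F \<and> N (r y) = y"
    by (metis bchoice)
  define w where "w x y = max 0 (\<delta> - dist x y)" for x y :: 'c
  \<comment> \<open>Capping the normalising sum below by \<open>\<delta>/2\<close> makes \<open>P\<close> continuous everywhere; on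
    \<open>N(F)\<close> the cap is inactive because every point is \<open>\<delta>/2\<close>-close to the net.\<close>
  define P where "P x = inverse (max (sum (w x) K) (\<delta>/2)) *\<^sub>R (\<Sum>y\<in>K. w x y *\<^sub>R S (r y))" for x
  show ?thesis
  proof
    show "continuous_on UNIV P"
      unfolding P_def w_def
      by (intro continuous_intros continuous_on_max continuous_on_inverse) (use \<open>\<delta> > 0\<close> in auto)
  next
    fix f assume f: "f \<in> F"
    obtain y0 where "y0 \<in> K" "dist (N f) y0 < \<delta>/2"
      using net f by (force simp: dist_commute)
    then have "\<delta>/2 \<le> w (N f) y0"
      by (simp add: w_def le_max_iff_disj)
    moreover have "w (N f) y0 \<le> sum (w (N f)) K"
      using K(1) \<open>y0 \<in> K\<close> by (intro member_le_sum) (auto simp: w_def)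
    ultimately have big: "\<delta>/2 \<le> sum (w (N f)) K"
      by linarith
    have "norm (S f - inverse (sum (w (N f)) K) *\<^sub>R (\<Sum>y\<in>K. w (N f) y *\<^sub>R S (r y))) \<le> c"
    proof (rule norm_diff_weighted_average_le[OF K(1)])
      fix y assume "y \<in> K" "w (N f) y \<noteq> 0"
      then have "dist (N f) (N (r y)) < \<delta>"
        using r by (auto simp: w_def max_def split: if_splits)
      then show "norm (S f - S (r y)) \<le> c"
        using modulus[OF f] r \<open>y \<in> K\<close> by (simp add: dist_norm)
    qed (use big \<open>\<delta> > 0\<close> in \<open>auto simp: w_def\<close>)
    then show "norm (S f - P (N f)) \<le> c"
      using big by (simp only: P_def max_absorb1)
  qed
qed

lemma wc_err_le_ennreal_iff:
  assumes "0 \<le> c"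
  shows "wc_err F S N Phi \<le> ennreal c \<longleftrightarrow> (\<forall>f\<in>F. norm (S f - Phi (N f)) \<le> c)"
  using assms by (simp add: wc_err_def SUP_le_iff)

lemma manifold_width_le_twice_wc_err:
  fixes F :: "'a::t2_space set" and S :: "'a \<Rightarrow> 'b::real_normed_vector"
  assumes F: "compact F" and S: "continuous_on F S" and N: "continuous_on F N"
    and NF: "N ` F \<subseteq> Rn n"
  shows "manifold_width n F S \<le> 2 * wc_err F S N Phi"
proof (cases "wc_err F S N Phi" rule: ennreal_cases)
  case (real \<epsilon>)
  then have err: "\<And>f. f \<in> F \<Longrightarrow> norm (S f - Phi (N f)) \<le> \<epsilon>"
    using wc_err_le_ennreal_iff[of \<epsilon> F S N Phi] by simp
  have fibre: "dist (S f) (S g) \<le> 2 * \<epsilon>" if "f \<in> F" "g \<in> F" "N f = N g" for f g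
    using norm_triangle_ineq4[of "S f - Phi (N f)" "S g - Phi (N g)"] err[OF that(1)] err[OF that(2)]
      that(3) by (simp add: dist_norm)
  have "manifold_width n F S \<le> ennreal (2 * \<epsilon>) + ennreal \<eta>" if "\<eta> > 0" for \<eta>
  proof -
    obtain \<delta> where "\<delta> > 0" and modulus:
      "\<And>f g. f \<in> F \<Longrightarrow> g \<in> F \<Longrightarrow> dist (N f) (N g) < \<delta> \<Longrightarrow> dist (S f) (S g) \<le> 2 * \<epsilon> + \<eta>"
      using uniform_fibre_modulus[OF F S N fibre \<open>\<eta> > 0\<close>] by blast
    obtain P where "continuous_on UNIV P" and P: "\<And>f. f \<in> F \<Longrightarrow> norm (S f - P (N f)) \<le> 2 * \<epsilon> + \<eta>"
      using continuous_approximate_factorization[where S = S, OF compact_continuous_image[OF N F] \<open>\<delta> > 0\<close> modulus]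
      by blast
    then have "manifold_width n F S \<le> wc_err F S N P"
      unfolding manifold_width_def using N NF
      by (intro INF_lower2[of "(N, P)"]) (auto intro: continuous_on_subset)
    also have "\<dots> \<le> ennreal (2 * \<epsilon> + \<eta>)"
      using P real \<open>\<eta> > 0\<close> by (subst wc_err_le_ennreal_iff) auto
    finally show ?thesis
      using real \<open>\<eta> > 0\<close> by (simp add: ennreal_plus)
  qed
  then have "manifold_width n F S \<le> ennreal (2 * \<epsilon>)"
    by (rule ennreal_le_epsilon)
  then show ?thesis
    using real by (simp add: ennreal_mult)
qed simp

theorem mainTheorem4:
  fixes F :: "'a::metric_space set" and S :: "'a \<Rightarrow> 'b::real_normed_vector" and n :: nat
  assumes "compact F" and "continuous_on F S"
  shows "manifold_width n F S \<le> 2 * e_cont_non n F S"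
proof -
  have "manifold_width n F S / 2 \<le> e_cont_non n F S"
    unfolding e_cont_non_def
    by (rule INF_greatest, clarify, rule divide_le_posI_ennreal)
      (auto intro: manifold_width_le_twice_wc_err[OF assms])
  then have "2 * (manifold_width n F S / 2) \<le> 2 * e_cont_non n F S"
    by (rule mult_left_mono) simp
  then show ?thesis
    by (simp add: ennreal_times_divide mult.commute[of 2] mult_divide_eq_ennreal)
qed

end
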